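(* Let $(S,\mathcal{E}^Q)$ be a quantitative evidence frame with $\mathcal{E}^Q=\{(E_1,p_1),\dots,(E_m,p_m)\}$, $p_j\in(0,1)$ for all $j$. Let $d:2^{\mathcal{E}}\to\tau_{\mathcal{E}}$ be given by $d(\emptyset)=S$ and, for nonempty $\mathbf{E}\subseteq\mathcal{E}$, $d(\mathbf{E})$ the least (w.r.t. inclusion) element of $\tau_{\mathbf{E}}$ that is dense in $\bigcup\mathbf{E}$ w.r.t. $\tau_{\mathbf{E}}$ (such a least element exists). Let $\mathcal{J}_{SD}$ be the set of all $D\in\tau_{\mathcal{E}}$ such that $D\cap T\neq\emptyset$ for all nonempty $T\in\tau_{\mathcal{E}}$. Let $B:2^S\to\{0,1\}$ be defined by $B(P)=1$ iff there exists $D\in\tau_{\mathcal{E}}$ with $D\subseteq P$ and $D\cap T\neq\emptyset$ for all $T\in\tau_{\mathcal{E}}\setminus\{\emptyset\}$. Then for every $P\subseteq S$: $B(P)=1$ if and only if $\mathrm{Bel}_{\mathcal{J}_{SD}}(d,P)>0$.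
   Context: A quantitative evidence frame is a pair $(S,\mathcal{E}^Q)$ where $S$ is a finite nonempty set and $\mathcal{E}^Q=\{(E_1,p_1),\dots,(E_m,p_m)\}$ with $E_1,\dots,E_m$ distinct, $p_j\in(0,1)$, and $\mathcal{E}=\{E_1,\dots,E_m\}$ a nonempty family of subsets of $S$ with $\emptyset\notin\mathcal{E}$, $S\notin\mathcal{E}$. For $\mathbf{E}\subseteq 2^S$, $\tau_{\mathbf{E}}$ is the topology on $S$ generated by $\mathbf{E}$: $\emptyset$, $S$, all finite intersections of members of $\mathbf{E}$, and all unions of such. For $\mathbf{E}\subseteq\mathcal{E}$, $D\in\tau_{\mathbf{E}}$ is dense in $\bigcup\mathbf{E}$ w.r.t. $\tau_{\mathbf{E}}$ if $D\cap T\neq\emptyset$ for all nonempty $T\in\tau_{\mathbf{E}}$. Define $\delta(\mathbf{E})=\prod_{E_j\in\mathbf{E}}p_j\prod_{E_j\notin\mathbf{E}}(1-p_j)$ for $\mathbf{E}\subseteq\mathcal{E}$; for $f:2^{\mathcal{E}}\to\tau_{\mathcal{E}}$, $\delta_\tau(f,T)=\sum_{\mathbf{E}\subseteq\mathcal{E}:\,f(\mathbf{E})=T}\delta(\mathbf{E})$ if $T\in\tau_{\mathcal{E}}$ and $0$ otherwise; for $\mathcal{J}\subseteq\tau_{\mathcal{E}}$, $\delta_{\mathcal{J}}(f,A)=\delta_\tau(f,A)/\sum_{T\in\mathcal{J}}\delta_\tau(f,T)$ if $A\in\mathcal{J}$ and $0$ otherwise; $\mathrm{Bel}_{\mathcal{J}}(f,P)=\sum_{A\subseteq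 P}\delta_{\mathcal{J}}(f,A)$. *)

theory Defs
  imports Main "HOL.Real"
begin

definition gen_top :: "'a set \<Rightarrow> 'a set set \<Rightarrow> 'a set set" where
  "gen_top S Es = {S} \<union>
     {U. \<exists>F. F \<subseteq> {\<Inter>G | G. G \<subseteq> Es \<and> finite G \<and> G \<noteq> {}} \<and> U = \<Union>F}"

definition dense_in_union :: "'a set \<Rightarrow> 'a set set \<Rightarrow> 'a set \<Rightarrow> bool" where
  "dense_in_union S Es D \<longleftrightarrow> D \<in> gen_top S Es \<and>
     (\<forall>T\<in>gen_top S Es. T \<noteq> {} \<longrightarrow> D \<inter> T \<noteq> {})"

definition dmap :: "'a set \<Rightarrow> 'a set set \<Rightarrow> 'a set" where
  "dmap S Es = (if Es = {} then S else (LEAST D. dense_in_union S Es D))"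

definition delta :: "'a set set \<Rightarrow> ('a set \<Rightarrow> real) \<Rightarrow> 'a set set \<Rightarrow> real" where
  "delta \<E> p Es = (\<Prod>e\<in>Es. p e) * (\<Prod>e\<in>\<E> - Es. 1 - p e)"

definition delta_tau :: "'a set \<Rightarrow> 'a set set \<Rightarrow> ('a set \<Rightarrow> real)
    \<Rightarrow> ('a set set \<Rightarrow> 'a set) \<Rightarrow> 'a set \<Rightarrow> real" where
  "delta_tau S \<E> p f T = (if T \<in> gen_top S \<E>
     then (\<Sum>Es\<in>{Es. Es \<subseteq> \<E> \<and> f Es = T}. delta \<E> p Es) else 0)"

definition delta_J :: "'a set \<Rightarrow> 'a set set \<Rightarrow> ('a set \<Rightarrow> real) \<Rightarrow> 'a set set
    \<Rightarrow> ('a set set \<Rightarrow> 'a set) \<Rightarrow> 'a set \<Rightarrow> real" where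
  "delta_J S \<E> p J f A = (if A \<in> J
     then delta_tau S \<E> p f A / (\<Sum>T\<in>J. delta_tau S \<E> p f T) else 0)"

definition Bel :: "'a set \<Rightarrow> 'a set set \<Rightarrow> ('a set \<Rightarrow> real) \<Rightarrow> 'a set set
    \<Rightarrow> ('a set set \<Rightarrow> 'a set) \<Rightarrow> 'a set \<Rightarrow> real" where
  "Bel S \<E> p J f P = (\<Sum>A\<in>Pow P. delta_J S \<E> p J f A)"

definition J_SD :: "'a set \<Rightarrow> 'a set set \<Rightarrow> 'a set set" where
  "J_SD S \<E> = {D \<in> gen_top S \<E>. \<forall>T\<in>gen_top S \<E>. T \<noteq> {} \<longrightarrow> D \<inter> T \<noteq> {}}"

definition Bfun :: "'a set \<Rightarrow> 'a set set \<Rightarrow> 'a set \<Rightarrow> nat" where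
  "Bfun S \<E> P = (if \<exists>D\<in>gen_top S \<E>. D \<subseteq> P \<and>
      (\<forall>T\<in>gen_top S \<E> - {{}}. D \<inter> T \<noteq> {}) then 1 else 0)"

end

theory Submission
  imports Defs
begin

text \<open>The dense open sets of a topology are closed under finite intersections, so on a
  finite carrier there is a least one; in particular \<open>dmap S \<E>\<close> is contained in every dense
  open set of \<open>\<tau>\<^sub>\<E>\<close>. If some dense open set lies inside \<open>P\<close>, then so does \<open>dmap S \<E>\<close>, which
  is itself in \<open>J_SD\<close> and receives the positive mass \<open>\<delta>(\<E>)\<close>; hence \<open>Bel(P) > 0\<close>.
  Conversely, positive belief in \<open>P\<close> needs some member of \<open>J_SD\<close> below \<open>P\<close>.\<close>

lemma gen_top_subset_carrier:
  assumes "Es \<subseteq> Pow S" and "U \<in> gen_top S Es"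
  shows "U \<subseteq> S"
  using assms unfolding gen_top_def by blast

lemma carrier_in_gen_top: "S \<in> gen_top S Es"
  unfolding gen_top_def by simp

lemma gen_top_Int:
  assumes Es: "Es \<subseteq> Pow S" and U: "U \<in> gen_top S Es" and V: "V \<in> gen_top S Es"
  shows "U \<inter> V \<in> gen_top S Es"
proof (cases "U = S \<or> V = S")
  case True
  moreover have "U \<subseteq> S" "V \<subseteq> S"
    using gen_top_subset_carrier[OF Es] U V by auto
  ultimately have "U \<inter> V = V \<or> U \<inter> V = U" by blast
  then show ?thesis using U V by auto
next
  case False
  let ?B = "{\<Inter>G | G. G \<subseteq> Es \<and> finite G \<and> G \<noteq> {}}"
  obtain F1 where F1: "F1 \<subseteq> ?B" "U = \<Union>F1" using False U unfolding gen_top_def by blast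
  obtain F2 where F2: "F2 \<subseteq> ?B" "V = \<Union>F2" using False V unfolding gen_top_def by blast
  let ?F = "{a \<inter> b | a b. a \<in> F1 \<and> b \<in> F2}"
  have "?F \<subseteq> ?B"
  proof
    fix x assume "x \<in> ?F"
    then obtain a b where ab: "x = a \<inter> b" "a \<in> F1" "b \<in> F2" by blast
    obtain G1 where G1: "a = \<Inter>G1" "G1 \<subseteq> Es" "finite G1" "G1 \<noteq> {}" using ab F1 by blast
    obtain G2 where G2: "b = \<Inter>G2" "G2 \<subseteq> Es" "finite G2" "G2 \<noteq> {}" using ab F2 by blast
    have "x = \<Inter>(G1 \<union> G2)" using ab G1 G2 by auto
    then show "x \<in> ?B" using G1 G2 by blast
  qed
  moreover have "U \<inter> V = \<Union>?F" using F1 F2 by blast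
  ultimately show ?thesis unfolding gen_top_def by blast
qed

lemma dense_in_union_carrier:
  assumes "Es \<subseteq> Pow S"
  shows "dense_in_union S Es S"
  using gen_top_subset_carrier[OF assms] carrier_in_gen_top
  unfolding dense_in_union_def by (metis inf.absorb_iff2)

lemma dense_in_unionD:
  assumes "dense_in_union S Es D"
  shows dense_in_union_open: "D \<in> gen_top S Es"
    and dense_in_union_meets: "T \<in> gen_top S Es \<Longrightarrow> T \<noteq> {} \<Longrightarrow> D \<inter> T \<noteq> {}"
  using assms unfolding dense_in_union_def by simp_all

lemma dense_in_union_Int:
  assumes Es: "Es \<subseteq> Pow S" and D1: "dense_in_union S Es D1" and D2: "dense_in_union S Es D2"
  shows "dense_in_union S Es (D1 \<inter> D2)"
  unfolding dense_in_union_def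
proof (intro conjI ballI impI)
  show "D1 \<inter> D2 \<in> gen_top S Es"
    using gen_top_Int[OF Es dense_in_union_open[OF D1] dense_in_union_open[OF D2]] .
next
  fix T assume T: "T \<in> gen_top S Es" "T \<noteq> {}"
  have "D2 \<inter> T \<in> gen_top S Es"
    using gen_top_Int[OF Es dense_in_union_open[OF D2] T(1)] .
  moreover have "D2 \<inter> T \<noteq> {}"
    using dense_in_union_meets[OF D2 T] .
  ultimately have "D1 \<inter> (D2 \<inter> T) \<noteq> {}"
    by (rule dense_in_union_meets[OF D1])
  then show "D1 \<inter> D2 \<inter> T \<noteq> {}" by (simp add: Int_assoc)
qed

lemma ex_least_dense_in_union:
  assumes S: "finite S" and Es: "Es \<subseteq> Pow S"
  shows "\<exists>D. dense_in_union S Es D \<and> (\<forall>D'. dense_in_union S Es D' \<longrightarrow> D \<subseteq> D')"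
proof -
  obtain D where D: "dense_in_union S Es D"
    and min: "\<And>D'. dense_in_union S Es D' \<Longrightarrow> card D \<le> card D'"
    using ex_has_least_nat[of "dense_in_union S Es" S card, OF dense_in_union_carrier[OF Es]]
    by blast
  have "finite D"
    using gen_top_subset_carrier[OF Es dense_in_union_open[OF D]] S by (rule finite_subset)
  have "D \<subseteq> D'" if D': "dense_in_union S Es D'" for D'
  proof -
    \<comment> \<open>\<open>D \<inter> D'\<close> is again dense, so by cardinality minimality it cannot be smaller than \<open>D\<close>.\<close>
    have "card D \<le> card (D \<inter> D')" using min dense_in_union_Int[OF Es D D'] .
    then have "D \<inter> D' = D" using \<open>finite D\<close> by (metis Int_lower1 card_seteq)
    then show ?thesis by blast
  qed
  then show ?thesis using D by blast
qed

lemma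
  assumes "finite S" and "Es \<subseteq> Pow S" and "Es \<noteq> {}"
  shows dense_in_union_dmap: "dense_in_union S Es (dmap S Es)"
    and dmap_subset_dense: "dense_in_union S Es D \<Longrightarrow> dmap S Es \<subseteq> D"
proof -
  obtain D0 where D0: "dense_in_union S Es D0" "\<And>D'. dense_in_union S Es D' \<Longrightarrow> D0 \<subseteq> D'"
    using ex_least_dense_in_union[OF assms(1,2)] by blast
  have "dmap S Es = D0"
    unfolding dmap_def using assms(3) by (auto intro!: Least_equality D0)
  then show "dense_in_union S Es (dmap S Es)" "dense_in_union S Es D \<Longrightarrow> dmap S Es \<subseteq> D"
    using D0 by auto
qed

lemma J_SD_eq_dense_in_union: "J_SD S Es = Collect (dense_in_union S Es)"
  unfolding J_SD_def dense_in_union_def by auto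

lemma finite_J_SD:
  assumes "finite S" and "Es \<subseteq> Pow S"
  shows "finite (J_SD S Es)"
proof -
  have "J_SD S Es \<subseteq> Pow S"
    unfolding J_SD_def using gen_top_subset_carrier[OF assms(2)] by blast
  then show ?thesis using assms(1) by (meson finite_Pow_iff finite_subset)
qed

lemma Bfun_eq_1_iff: "Bfun S Es P = 1 \<longleftrightarrow> (\<exists>D\<in>J_SD S Es. D \<subseteq> P)"
  unfolding Bfun_def J_SD_def by auto

lemma delta_nonneg:
  assumes "\<forall>e\<in>\<E>. 0 \<le> p e \<and> p e \<le> 1" and "Es \<subseteq> \<E>"
  shows "delta \<E> p Es \<ge> 0"
  using assms unfolding delta_def by (auto intro!: mult_nonneg_nonneg prod_nonneg)

lemma delta_pos:
  assumes "\<forall>e\<in>\<E>. 0 < p e \<and> p e < 1" and "Es \<subseteq> \<E>"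
  shows "delta \<E> p Es > 0"
  using assms unfolding delta_def by (auto intro!: mult_pos_pos prod_pos)

lemma delta_tau_nonneg:
  assumes "\<forall>e\<in>\<E>. 0 \<le> p e \<and> p e \<le> 1"
  shows "delta_tau S \<E> p f T \<ge> 0"
  using delta_nonneg[OF assms] unfolding delta_tau_def by (auto intro: sum_nonneg)

lemma delta_tau_pos:
  assumes "finite \<E>" and p: "\<forall>e\<in>\<E>. 0 < p e \<and> p e < 1"
    and "Es \<subseteq> \<E>" and "f Es \<in> gen_top S \<E>"
  shows "delta_tau S \<E> p f (f Es) > 0"
proof -
  have "delta \<E> p Es \<le> (\<Sum>Es'\<in>{Es'. Es' \<subseteq> \<E> \<and> f Es' = f Es}. delta \<E> p Es')"
    using assms(1,3) by (intro member_le_sum) (auto intro: less_imp_le delta_pos[OF p])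
  then show ?thesis
    using delta_pos[OF p \<open>Es \<subseteq> \<E>\<close>] \<open>f Es \<in> gen_top S \<E>\<close> unfolding delta_tau_def by auto
qed

lemma delta_J_pos_iff:
  assumes "finite J" and "\<forall>e\<in>\<E>. 0 \<le> p e \<and> p e \<le> 1"
  shows "delta_J S \<E> p J f A > 0 \<longleftrightarrow> A \<in> J \<and> delta_tau S \<E> p f A > 0"
proof (cases "A \<in> J")
  case True
  have "delta_tau S \<E> p f A \<le> (\<Sum>T\<in>J. delta_tau S \<E> p f T)"
    using True assms by (intro member_le_sum delta_tau_nonneg) auto
  then show ?thesis
    using True delta_tau_nonneg[OF assms(2), of S f A]
    unfolding delta_J_def by (auto simp: zero_less_divide_iff)
next
  case False
  then show ?thesis unfolding delta_J_def by simp
qed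

lemma Bel_pos_iff:
  assumes "finite J" and "finite P" and p: "\<forall>e\<in>\<E>. 0 \<le> p e \<and> p e \<le> 1"
  shows "Bel S \<E> p J f P > 0 \<longleftrightarrow> (\<exists>A\<in>J. A \<subseteq> P \<and> delta_tau S \<E> p f A > 0)"
proof -
  have nonneg: "delta_J S \<E> p J f A \<ge> 0" for A
    using delta_tau_nonneg[OF p]
    unfolding delta_J_def by (auto intro!: divide_nonneg_nonneg sum_nonneg)
  have "Bel S \<E> p J f P > 0 \<longleftrightarrow> (\<exists>A\<in>Pow P. delta_J S \<E> p J f A > 0)"
    unfolding Bel_def using nonneg assms(2)
    by (metis (no_types, lifting) finite_Pow_iff order_less_le sum_nonneg sum_nonneg_eq_0_iff)
  also have "\<dots> \<longleftrightarrow> (\<exists>A\<in>J. A \<subseteq> P \<and> delta_tau S \<E> p f A > 0)"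
    using delta_J_pos_iff[OF assms(1) p] by auto
  finally show ?thesis .
qed

theorem proposition6:
  fixes S :: "'a set" and \<E> :: "'a set set" and p :: "'a set \<Rightarrow> real" and P :: "'a set"
  assumes "finite S" and "S \<noteq> {}"
    and "\<E> \<noteq> {}" and "\<E> \<subseteq> Pow S" and "{} \<notin> \<E>" and "S \<notin> \<E>"
    and "\<forall>e\<in>\<E>. 0 < p e \<and> p e < 1"
    and "P \<subseteq> S"
  shows "Bfun S \<E> P = 1 \<longleftrightarrow> Bel S \<E> p (J_SD S \<E>) (dmap S) P > 0"
proof -
  have "finite \<E>" "finite P"
    using assms(1,4,8) by (meson finite_Pow_iff finite_subset)+
  have Bel_pos: "Bel S \<E> p (J_SD S \<E>) (dmap S) P > 0 \<longleftrightarrow>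
      (\<exists>A\<in>J_SD S \<E>. A \<subseteq> P \<and> delta_tau S \<E> p (dmap S) A > 0)"
    using assms(7) by (intro Bel_pos_iff finite_J_SD assms(1,4) \<open>finite P\<close>) auto
  have least: "dmap S \<E> \<in> J_SD S \<E>" "\<And>D. D \<in> J_SD S \<E> \<Longrightarrow> dmap S \<E> \<subseteq> D"
    using dense_in_union_dmap[OF assms(1,4,3)] dmap_subset_dense[OF assms(1,4,3)]
    unfolding J_SD_eq_dense_in_union by auto
  have "delta_tau S \<E> p (dmap S) (dmap S \<E>) > 0"
    using least(1) unfolding J_SD_def
    by (intro delta_tau_pos \<open>finite \<E>\<close> assms(7)) auto
  then show ?thesis
    unfolding Bel_pos Bfun_eq_1_iff using least by blast
qed

end
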